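(* Let $(p_n)_{n\in\mathbb N}\subset\mathbb R$ and suppose there are constants $C>0$, $\theta_0\ge0$ with $|p_n|\le C\lambda_n^{\theta_0}$ for all $n\in\mathbb N$. Let $(\ell_m)_{m\in\mathbb N}\subset\mathbb N$ satisfy $\lim_{m\to\infty}\ell_m=\infty$. If for every $m\in\mathbb N$ the series $\sum_{n=1}^\infty p_n\lambda_n^{-\ell_m}$ converges and equals $0$, then $p_n=0$ for all $n\in\mathbb N$.
   Context: $\Omega\subset\mathbb{R}^d$ is a bounded domain with smooth boundary; $A v=-\sum_{i,j=1}^d\partial_i(a_{ij}\partial_jv)-cv$ with $a_{ij}=a_{ji}$, $c$ sufficiently smooth on $\overline\Omega$, $c\le0$, uniformly elliptic, $\mathcal D(A)=H^2(\Omega)\cap H^1_0(\Omega)$. $0<\lambda_1<\lambda_2<\cdots\to\infty$ denote the distinct eigenvalues of $A$ (each of finite multiplicity). *)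

theory Defs
  imports "HOL-Analysis.Analysis"
begin

text \<open>Abstraction of the sequence of distinct eigenvalues
  0 < lambda_1 < lambda_2 < ... tending to infinity (indexed from 0 here).\<close>
definition eigenvalue_seq :: "(nat \<Rightarrow> real) \<Rightarrow> bool" where
  "eigenvalue_seq lam \<longleftrightarrow> (\<forall>n. 0 < lam n) \<and> strict_mono lam \<and> filterlim lam at_top sequentially"

end

theory Submission
  imports Defs
begin

text \<open>Multiplying the vanishing series by the decreasing weights lam n ^ -k does not change
  the bound 2B on its partial sums from index N+1 on (Abel summation, B a bound for the tails
  of the l 0 series), while the leading term p N grows like (lam (N+1) / lam N) ^ k relative
  to them. Hence p N = 0 once all earlier coefficients vanish.\<close>

lemma abel_summation_bound:
  fixes a w T :: "nat \<Rightarrow> real"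
  assumes T: "\<And>n. T n = a n + T (Suc n)"
    and TB: "\<And>n. \<bar>T n\<bar> \<le> B"
    and wd: "\<And>n. w (Suc n) \<le> w n" and wp: "\<And>n. 0 \<le> w n"
  shows "\<bar>\<Sum>i\<le>k. a (j+i) * w (j+i)\<bar> \<le> 2 * B * w j"
proof -
  have partial: "\<bar>(\<Sum>i\<le>k. a (j+i) * w (j+i)) + T (Suc (j+k)) * w (j+k)\<bar> \<le> B * (2 * w j - w (j+k))"
    for k
  proof (induction k)
    case 0
    have "a j * w j + T (Suc j) * w j = T j * w j" using T[of j] by (simp add: distrib_right)
    moreover have "\<bar>T j * w j\<bar> \<le> B * w j"
      using TB[of j] wp[of j] by (simp add: abs_mult mult_right_mono)
    ultimately show ?case by simp
  next
    case (Suc k)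
    have eq: "(\<Sum>i\<le>Suc k. a (j+i) * w (j+i)) + T (Suc (j+Suc k)) * w (j+Suc k)
       = ((\<Sum>i\<le>k. a (j+i) * w (j+i)) + T (Suc (j+k)) * w (j+k)) + T (Suc (j+k)) * (w (Suc (j+k)) - w (j+k))"
      using T[of "Suc (j+k)"] by (simp add: algebra_simps)
    have "\<bar>T (Suc (j+k)) * (w (Suc (j+k)) - w (j+k))\<bar> \<le> B * (w (j+k) - w (Suc (j+k)))"
      using TB[of "Suc (j+k)"] wd[of "j+k"] by (simp add: abs_mult mult_right_mono)
    moreover have "B * (2 * w j - w (j+k)) + B * (w (j+k) - w (Suc (j+k))) = B * (2 * w j - w (j + Suc k))"
      by (simp add: algebra_simps)
    ultimately show ?case
      unfolding eq using Suc abs_triangle_ineq[of "(\<Sum>i\<le>k. a (j+i) * w (j+i)) + T (Suc (j+k)) * w (j+k)"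
          "T (Suc (j+k)) * (w (Suc (j+k)) - w (j+k))"]
      by linarith
  qed
  have "\<bar>T (Suc (j+k)) * w (j+k)\<bar> \<le> B * w (j+k)"
    using TB[of "Suc (j+k)"] wp[of "j+k"] by (simp add: abs_mult mult_right_mono)
  moreover have "B * (2 * w j - w (j+k)) + B * w (j+k) = 2 * B * w j" by (simp add: algebra_simps)
  ultimately show ?thesis using partial[of k] by linarith
qed

lemma summable_tails_bounded:
  fixes a :: "nat \<Rightarrow> real"
  assumes "summable a"
  obtains B where "\<And>n. \<bar>\<Sum>k. a (k + n)\<bar> \<le> B"
proof -
  have "(\<lambda>n. \<Sum>k. a (k + n)) = (\<lambda>n. suminf a - (\<Sum>i<n. a i))"
    using suminf_minus_initial_segment[OF assms] by (simp add: fun_eq_iff)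
  moreover have "(\<lambda>n. suminf a - (\<Sum>i<n. a i)) \<longlonglongrightarrow> suminf a - suminf a"
    by (intro tendsto_diff tendsto_const summable_LIMSEQ assms)
  ultimately have "Bseq (\<lambda>n. \<Sum>k. a (k + n))" by (auto intro: convergent_imp_Bseq convergentI)
  then obtain B where "\<And>n. norm (\<Sum>k. a (k + n)) \<le> B" by (metis BseqE)
  then show ?thesis using that unfolding real_norm_def by blast
qed

lemma suminf_tail_Suc:
  fixes a :: "nat \<Rightarrow> real"
  assumes "summable a"
  shows "(\<Sum>k. a (k + n)) = a n + (\<Sum>k. a (k + Suc n))"
  using suminf_split_head[OF summable_ignore_initial_segment[OF assms, of n]] by simp

lemma weighted_series_leading_term_bound:
  fixes a w :: "nat \<Rightarrow> real"
  assumes sa: "summable a" and TB: "\<And>n. \<bar>\<Sum>k. a (k + n)\<bar> \<le> B"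
    and wd: "\<And>n. w (Suc n) \<le> w n" and wp: "\<And>n. 0 \<le> w n"
    and sums0: "(\<lambda>n. a n * w n) sums 0" and below: "\<And>i. i < N \<Longrightarrow> a i = 0"
  shows "\<bar>a N * w N\<bar> \<le> 2 * B * w (Suc N)"
proof -
  define b where "b n = a n * w n" for n
  have "(\<Sum>i<N. b i) = 0" using below by (simp add: b_def)
  moreover have "b sums 0" using sums0 by (simp add: b_def[abs_def])
  ultimately have "(\<lambda>i. b (i + N)) sums 0" using sums_iff_shift[of b N 0] by simp
  then have lim: "(\<lambda>K. \<bar>\<Sum>i<K. b (i + N)\<bar>) \<longlonglongrightarrow> 0"
    unfolding sums_def using tendsto_rabs by fastforce
  have "\<bar>b N\<bar> - 2 * B * w (Suc N) \<le> \<bar>\<Sum>i<Suc (Suc q). b (i + N)\<bar>" for q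
  proof -
    have "(\<Sum>i<Suc (Suc q). b (i + N)) = b N + (\<Sum>i\<le>q. b (Suc N + i))"
      by (subst sum.lessThan_Suc_shift) (simp add: lessThan_Suc_atMost add.commute)
    moreover have "\<bar>\<Sum>i\<le>q. b (Suc N + i)\<bar> \<le> 2 * B * w (Suc N)"
      unfolding b_def using abel_summation_bound[of "\<lambda>n. \<Sum>k. a (k + n)" a B w "Suc N" q, OF suminf_tail_Suc[OF sa] TB wd wp] .
    ultimately show ?thesis by linarith
  qed
  then have "\<forall>K\<ge>2. \<bar>b N\<bar> - 2 * B * w (Suc N) \<le> \<bar>\<Sum>i<K. b (i + N)\<bar>"
    by (metis add_2_eq_Suc le_Suc_ex)
  then have "\<bar>b N\<bar> - 2 * B * w (Suc N) \<le> 0" by (intro LIMSEQ_le_const[OF lim]) blast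
  then show ?thesis by (simp add: b_def)
qed

lemma coefficient_bound_by_eigenvalue_ratio:
  fixes lam p :: "nat \<Rightarrow> real"
  assumes lp: "\<And>n. 0 < lam n" and sm: "strict_mono lam"
    and sa: "summable (\<lambda>n. p n / lam n ^ L)" and TB: "\<And>n. \<bar>\<Sum>k. p (k + n) / lam (k + n) ^ L\<bar> \<le> B"
    and sums0: "(\<lambda>n. p n / lam n ^ (L + k)) sums 0" and below: "\<And>i. i < N \<Longrightarrow> p i = 0"
  shows "\<bar>p N\<bar> \<le> 2 * B * lam N ^ L * (lam N / lam (Suc N)) ^ k"
proof -
  define w where "w n = 1 / lam n ^ k" for n
  have wd: "w (Suc n) \<le> w n" for n
    unfolding w_def using lp[of n] strict_monoD[OF sm, of n "Suc n"]
    by (auto intro!: divide_left_mono power_mono mult_pos_pos)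
  have wp: "0 \<le> w n" for n unfolding w_def using lp[of n] by simp
  have "(\<lambda>n. p n / lam n ^ L * w n) sums 0"
    using sums0 by (simp add: w_def power_add)
  then have "\<bar>p N / lam N ^ L * w N\<bar> \<le> 2 * B * w (Suc N)"
    using weighted_series_leading_term_bound[of "\<lambda>n. p n / lam n ^ L" B w N, OF sa TB wd wp] below by simp
  then have "\<bar>p N\<bar> / lam N ^ (L + k) \<le> 2 * B / lam (Suc N) ^ k"
    unfolding w_def using lp[of N] by (simp add: abs_divide power_add)
  then show ?thesis
    using lp[of N] by (simp add: divide_le_eq power_add power_divide)
qed

lemma filterlim_minus_const_nat_at_top:
  fixes f :: "'a \<Rightarrow> nat"
  assumes "filterlim f at_top F"
  shows "filterlim (\<lambda>x. f x - c) at_top F"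
  unfolding filterlim_at_top
proof
  fix Z
  have "eventually (\<lambda>x. Z + c \<le> f x) F" using assms by (simp add: filterlim_at_top)
  then show "eventually (\<lambda>x. Z \<le> f x - c) F" by (rule eventually_mono) simp
qed

lemma coefficients_zero_if_inverse_power_series_vanish:
  fixes lam p :: "nat \<Rightarrow> real" and l :: "nat \<Rightarrow> nat"
  assumes lp: "\<And>n. 0 < lam n" and sm: "strict_mono lam"
    and l: "filterlim l at_top sequentially"
    and sums0: "\<And>m. (\<lambda>n. p n / lam n ^ l m) sums 0"
  shows "p N = 0"
proof -
  define L where "L = l 0"
  have sa: "summable (\<lambda>n. p n / lam n ^ L)" using sums0[of 0] by (simp add: L_def sums_summable)
  obtain B where TB: "\<And>n. \<bar>\<Sum>k. p (k + n) / lam (k + n) ^ L\<bar> \<le> B"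
    using summable_tails_bounded[OF sa] by blast
  have k: "filterlim (\<lambda>M. l M - L) at_top sequentially"
    using filterlim_minus_const_nat_at_top[OF l] .
  show ?thesis
  proof (induction N rule: less_induct)
    case (less N)
    define r where "r = lam N / lam (Suc N)"
    have r: "0 < r" "r < 1"
      using lp[of N] lp[of "Suc N"] strict_monoD[OF sm, of N "Suc N"] by (auto simp: r_def)
    have "(\<lambda>M. 2 * B * lam N ^ L * r ^ (l M - L)) \<longlonglongrightarrow> 2 * B * lam N ^ L * 0"
      using r by (intro tendsto_mult_left filterlim_compose[OF LIMSEQ_power_zero k]) auto
    moreover have "eventually (\<lambda>M. \<bar>p N\<bar> \<le> 2 * B * lam N ^ L * r ^ (l M - L)) sequentially"
    proof -
      have "eventually (\<lambda>M. L \<le> l M) sequentially" using l by (simp add: filterlim_at_top)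
      then show ?thesis
      proof eventually_elim
        case (elim M)
        then have "(\<lambda>n. p n / lam n ^ (L + (l M - L))) sums 0" using sums0[of M] by simp
        then show ?case unfolding r_def
          using coefficient_bound_by_eigenvalue_ratio[OF lp sm sa TB] less.IH by blast
      qed
    qed
    ultimately have "\<bar>p N\<bar> \<le> 0" by (intro tendsto_le[OF _ _ tendsto_const]) auto
    then show ?case by simp
  qed
qed

theorem lemma5:
  fixes lam :: "nat \<Rightarrow> real" and p :: "nat \<Rightarrow> real" and l :: "nat \<Rightarrow> nat"
    and C \<theta>0 :: real
  assumes "eigenvalue_seq lam"
    and "C > 0" and "\<theta>0 \<ge> 0"
    and "\<And>n. \<bar>p n\<bar> \<le> C * lam n powr \<theta>0"
    and "filterlim l at_top sequentially"
    and "\<And>m. (\<lambda>n. p n * lam n powr (- real (l m))) sums 0"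
  shows "\<forall>n. p n = 0"
proof
  fix N
  have lp: "\<And>n. 0 < lam n" and sm: "strict_mono lam"
    using assms(1) unfolding eigenvalue_seq_def by auto
  have "p n * lam n powr (- real (l m)) = p n / lam n ^ l m" for n m
    using lp[of n] by (simp add: powr_minus powr_realpow divide_inverse)
  then have "(\<lambda>n. p n / lam n ^ l m) sums 0" for m using assms(6)[of m] by simp
  then show "p N = 0"
    using coefficients_zero_if_inverse_power_series_vanish[OF lp sm assms(5)] by blast
qed

end
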